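(* For the redundancy-$d$ cancel-on-completion model described in the context, provided the normalising sum is finite, the stationary distribution of the token state descriptor is $$\pi((T_1,n_1,\dots,T_i,n_i))=\pi((0))\frac1{i!}\prod_{j=1}^i\Big(\frac{j\lambda}{\mu\binom Kd F_j(T_1,\dots,T_j)}\Big)^{n_j+1},$$ for all $i\in\{0,\dots,\binom Kd\}$, distinct $T_1,\dots,T_i$ and $n_j\in\mathbb N_0$.
   Context: Redundancy-$d$ COC model: $K$ homogeneous servers, each with its own FCFS queue, serving at exponential rate $\mu$. Customers arrive as a Poisson process with rate $\lambda$; each picks a uniformly random set of $d$ of the $K$ servers and sends a copy to each, copies having independent exponential($\mu$) service requirements; when any copy completes, all copies of that customer are removed. Customer types correspond to the $\binom Kd$ server subsets, each with arrival rate $\lambda/\binom Kd$. Token representation: one token per type, held by the oldest customer of that type present. State: $(0)$ or $(T_1,n_1,\dots,T_i,n_i)$ with $T_1,\dots,T_i$ distinct held tokens ordered by arrival of their holders and $n_j$ the number of non-holding customers arriving between holders of $T_j$ and $T_{j+1}$ (after the holder of $T_i$ for $j=i$). $F_j(T_1,\dots,T_j)$ denotes the number of servers in the union of the server sets of the types corresponding to $T_1,\dots,T_j$. *)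

theory Defs
  imports "HOL-Analysis.Analysis"
begin

definition stationary_dist :: "'s set \<Rightarrow> ('s \<Rightarrow> 's \<Rightarrow> real) \<Rightarrow> ('s \<Rightarrow> real) \<Rightarrow> bool" where
  "stationary_dist S q p \<longleftrightarrow>
     (\<forall>x\<in>S. 0 \<le> p x) \<and> (p has_sum 1) S \<and>
     (\<forall>x\<in>S. p x * (\<Sum>\<^sub>\<infinity>y\<in>S - {x}. q x y) = (\<Sum>\<^sub>\<infinity>y\<in>S - {x}. p y * q y x))"

definition ctypes :: "nat \<Rightarrow> nat \<Rightarrow> nat set set" where
  "ctypes K d = {T. T \<subseteq> {..<K} \<and> card T = d}"

text \<open>Detailed state: list of types of the customers present, in order of arrival
  (oldest first).\<close>

definition cstates :: "nat \<Rightarrow> nat \<Rightarrow> nat set list set" where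
  "cstates K d = {xs. set xs \<subseteq> ctypes K d}"

text \<open>Number of servers at which the k-th customer is in service (i.e. is the oldest
  customer in that server's FCFS queue).\<close>

definition nserving :: "nat set list \<Rightarrow> nat \<Rightarrow> nat" where
  "nserving xs k = card (xs ! k - \<Union> (set (take k xs)))"

definition del_at :: "nat \<Rightarrow> 'a list \<Rightarrow> 'a list" where
  "del_at k xs = take k xs @ drop (Suc k) xs"

definition coc_rate :: "nat \<Rightarrow> nat \<Rightarrow> real \<Rightarrow> real \<Rightarrow> nat set list \<Rightarrow> nat set list \<Rightarrow> real" where
  "coc_rate K d lam mu xs ys =
     (if \<exists>t\<in>ctypes K d. ys = xs @ [t] then lam / real (K choose d) else 0)
     + (\<Sum>k<length xs. if ys = del_at k xs then mu * real (nserving xs k) else 0)"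

text \<open>Token state (T_1,n_1,...,T_i,n_i) as a list of pairs; the empty list is state (0).
  A customer holds the token of its type iff it is the oldest customer of that type.\<close>

definition tok_step :: "(nat set \<times> nat) list \<Rightarrow> nat set \<Rightarrow> (nat set \<times> nat) list" where
  "tok_step ts t =
     (if t \<in> fst ` set ts
      then butlast ts @ [(fst (last ts), Suc (snd (last ts)))]
      else ts @ [(t, 0)])"

definition tok :: "nat set list \<Rightarrow> (nat set \<times> nat) list" where
  "tok xs = foldl tok_step [] xs"

definition tok_states :: "nat \<Rightarrow> nat \<Rightarrow> (nat set \<times> nat) list set" where
  "tok_states K d = {ts. distinct (map fst ts) \<and> set (map fst ts) \<subseteq> ctypes K d}"

definition Fj :: "nat \<Rightarrow> (nat set \<times> nat) list \<Rightarrow> nat" where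
  "Fj j ts = card (\<Union> (set (map fst (take j ts))))"

text \<open>Unnormalised product-form weight pi(s)/pi((0)).\<close>

definition tok_weight :: "nat \<Rightarrow> nat \<Rightarrow> real \<Rightarrow> real \<Rightarrow> (nat set \<times> nat) list \<Rightarrow> real" where
  "tok_weight K d lam mu ts =
     (1 / fact (length ts)) *
     (\<Prod>j\<in>{1..length ts}.
        (real j * lam / (mu * real (K choose d) * real (Fj j ts))) ^ (snd (ts ! (j - 1)) + 1))"

definition tok_marg :: "nat \<Rightarrow> nat \<Rightarrow> (nat set list \<Rightarrow> real) \<Rightarrow> (nat set \<times> nat) list \<Rightarrow> real" where
  "tok_marg K d p ts = (\<Sum>\<^sub>\<infinity>xs\<in>{xs\<in>cstates K d. tok xs = ts}. p xs)"

end

theory Submission imports Defs begin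

text \<open>Record the detailed state as the list of customer types in arrival order. A customer is
  served by the servers of its type not used by older customers, so the total departure rate of
  a state x is mu F(x), with F(x) the number of servers in the union of the present types. The
  measure w(x) = prod_j lam / (binom(K, d) mu F(x_1, ..., x_j)) satisfies partial balance: the
  departure outflow mu F(x) w(x) is matched by the arrival of the last customer of x, and for
  every type t the arrival outflow of type t is matched by the departures of a type-t customer
  inserted at any position of x. Summing w over the detailed states with a given token state
  gives the product formula, because each customer arriving after the holder of T_j without a
  new token may have any of the j held types.

  For uniqueness, if p is stationary then e = |p - p(0) w| is a summable subinvariant measure.
  Each level (number of customers) is finite, and the flow from level n + 1 down to the levels
  below is at most mu K times the mass of level n + 1, which tends to 0; so subinvariance is
  equality. Since the first customer can always depart, an invariant measure vanishing at the
  empty state vanishes level by level.\<close>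

definition insert_nth :: "nat \<Rightarrow> 'a \<Rightarrow> 'a list \<Rightarrow> 'a list" where
  "insert_nth k t xs = take k xs @ t # drop k xs"

lemma set_insert_nth: "set (insert_nth k t xs) = insert t (set xs)"
  unfolding insert_nth_def by (metis Un_insert_right append_take_drop_id list.simps(15) set_append)

lemma length_insert_nth: "length (insert_nth k t xs) = Suc (length xs)"
  unfolding insert_nth_def by simp

lemma insert_nth_append_single:
  "k \<le> length xs \<Longrightarrow> insert_nth k t (xs @ [c]) = insert_nth k t xs @ [c]"
  unfolding insert_nth_def by simp

lemma insert_nth_length: "insert_nth (length xs) t xs = xs @ [t]"
  unfolding insert_nth_def by simp

lemma nth_insert_nth: "k \<le> length xs \<Longrightarrow> insert_nth k t xs ! k = t"
  unfolding insert_nth_def by (simp add: nth_append)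

lemma del_at_insert_nth: "k \<le> length xs \<Longrightarrow> del_at k (insert_nth k t xs) = xs"
  unfolding del_at_def insert_nth_def by simp

lemma insert_nth_del_at: "k < length ys \<Longrightarrow> insert_nth k (ys ! k) (del_at k ys) = ys"
  unfolding del_at_def insert_nth_def by (simp add: id_take_nth_drop[symmetric])

lemma length_del_at: "k < length ys \<Longrightarrow> length (del_at k ys) = length ys - 1"
  unfolding del_at_def by simp

lemma set_del_at: "set (del_at k ys) \<subseteq> set ys"
  unfolding del_at_def by (auto dest: in_set_takeD in_set_dropD)

lemma del_at_preimage:
  assumes "set xs \<subseteq> A" "k \<le> length xs"
  shows "{ys. set ys \<subseteq> A \<and> length ys = Suc (length xs) \<and> del_at k ys = xs}
         = (\<lambda>t. insert_nth k t xs) ` A"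
proof (intro equalityI subsetI)
  fix ys assume "ys \<in> {ys. set ys \<subseteq> A \<and> length ys = Suc (length xs) \<and> del_at k ys = xs}"
  then have ys: "set ys \<subseteq> A" "k < length ys" "del_at k ys = xs" using assms(2) by auto
  then have "ys = insert_nth k (ys ! k) xs" using insert_nth_del_at by metis
  moreover have "ys ! k \<in> A" using ys nth_mem by blast
  ultimately show "ys \<in> (\<lambda>t. insert_nth k t xs) ` A" by blast
qed (use assms in \<open>auto simp: set_insert_nth length_insert_nth del_at_insert_nth\<close>)

lemma nserving_append_single:
  "k < length xs \<Longrightarrow> nserving (xs @ [c]) k = nserving xs k"
  unfolding nserving_def by (simp add: nth_append)

lemma nserving_append_single_last:
  "nserving (xs @ [c]) (length xs) = card (c - \<Union> (set xs))"
  unfolding nserving_def by simp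

lemma card_Union_append_single:
  assumes "finite (\<Union> (set xs))" "finite c"
  shows "card (\<Union> (set (xs @ [c]))) = card (\<Union> (set xs)) + card (c - \<Union> (set xs))"
proof -
  have "\<Union> (set (xs @ [c])) = \<Union> (set xs) \<union> (c - \<Union> (set xs))" by auto
  moreover have "card (\<Union> (set xs) \<union> (c - \<Union> (set xs))) = card (\<Union> (set xs)) + card (c - \<Union> (set xs))"
    using assms by (intro card_Un_disjoint) auto
  ultimately show ?thesis by simp
qed

lemma sum_nserving:
  "(\<And>t. t \<in> set xs \<Longrightarrow> finite t) \<Longrightarrow> (\<Sum>k<length xs. nserving xs k) = card (\<Union> (set xs))"
proof (induction xs rule: rev_induct)
  case (snoc c xs)
  have "(\<Sum>k<length (xs @ [c]). nserving (xs @ [c]) k)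
        = (\<Sum>k<length xs. nserving xs k) + card (c - \<Union> (set xs))"
    by (simp add: nserving_append_single nserving_append_single_last)
  also have "\<dots> = card (\<Union> (set (xs @ [c])))"
    using snoc by (subst card_Union_append_single) auto
  finally show ?case .
qed simp

lemma finite_ctypes: "finite (ctypes K d)"
  unfolding ctypes_def by (rule finite_subset[of _ "Pow {..<K}"]) auto

lemma card_ctypes: "card (ctypes K d) = K choose d"
  unfolding ctypes_def using n_subsets[of "{..<K}" d] by simp

lemma ctypes_finite_nonempty:
  "t \<in> ctypes K d \<Longrightarrow> 1 \<le> d \<Longrightarrow> finite t \<and> t \<noteq> {}"
  unfolding ctypes_def by (auto intro: finite_subset)

lemma tok_Nil [simp]: "tok [] = []"
  unfolding tok_def by simp

lemma tok_append_single: "tok (xs @ [t]) = tok_step (tok xs) t"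
  unfolding tok_def by simp

lemma tok_eq_Nil_iff: "tok xs = [] \<longleftrightarrow> xs = []"
  by (cases xs rule: rev_cases) (auto simp: tok_def tok_step_def)

lemma fst_set_tok_step: "fst ` set (tok_step s t) = insert t (fst ` set s)"
proof (cases "t \<in> fst ` set s")
  case True
  then have ne: "s \<noteq> []" by auto
  have "fst ` set (tok_step s t) = fst ` set (butlast s @ [last s])"
    using True unfolding tok_step_def by auto
  then show ?thesis using True ne by (simp add: insert_absorb)
qed (auto simp: tok_step_def)

lemma fst_set_tok: "fst ` set (tok xs) = set xs"
  by (induction xs rule: rev_induct) (auto simp: tok_append_single fst_set_tok_step)

lemma distinct_map_fst_tok_step:
  "distinct (map fst s) \<Longrightarrow> distinct (map fst (tok_step s t))"
proof (cases "t \<in> fst ` set s")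
  case True
  assume "distinct (map fst s)"
  moreover have "s \<noteq> []" using True by auto
  moreover have "map fst (tok_step s t) = map fst (butlast s @ [last s])"
    using True unfolding tok_step_def by simp
  ultimately show ?thesis by simp
qed (auto simp: tok_step_def)

lemma distinct_tok: "distinct (map fst (tok xs))"
  by (induction xs rule: rev_induct)
    (auto simp: tok_def intro: distinct_map_fst_tok_step)

lemma tok_in_tok_states: "xs \<in> cstates K d \<Longrightarrow> tok xs \<in> tok_states K d"
  unfolding tok_states_def cstates_def using distinct_tok fst_set_tok by simp

definition tok_fiber :: "nat \<Rightarrow> nat \<Rightarrow> (nat set \<times> nat) list \<Rightarrow> nat set list set" where
  "tok_fiber K d ts = {xs \<in> cstates K d. tok xs = ts}"

lemma tok_fiber_Nil: "tok_fiber K d [] = {[]}"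
  unfolding tok_fiber_def cstates_def by (auto simp: tok_eq_Nil_iff)

lemma tok_step_eq_append_single_old:
  assumes "t \<in> fst ` set s"
  shows "tok_step s t = ts @ [(T, m)] \<longleftrightarrow> (\<exists>m'. m = Suc m' \<and> s = ts @ [(T, m')])"
proof -
  have "s \<noteq> []" using assms by auto
  then have "s = butlast s @ [(fst (last s), snd (last s))]" by simp
  moreover have "tok_step s t = butlast s @ [(fst (last s), Suc (snd (last s)))]"
    using assms unfolding tok_step_def by simp
  ultimately show ?thesis by (metis Pair_inject append1_eq_conv)
qed

lemma tok_step_eq_append_single_new:
  "t \<notin> fst ` set s \<Longrightarrow> tok_step s t = ts @ [(T, m)] \<longleftrightarrow> s = ts \<and> t = T \<and> m = 0"
  unfolding tok_step_def by auto

lemma tok_fiber_append_new: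
  assumes "ts @ [(T, 0)] \<in> tok_states K d"
  shows "tok_fiber K d (ts @ [(T, 0)]) = (\<lambda>xs. xs @ [T]) ` tok_fiber K d ts"
proof (intro equalityI subsetI)
  fix xs assume xs: "xs \<in> tok_fiber K d (ts @ [(T, 0)])"
  then obtain ys t where e: "xs = ys @ [t]"
    unfolding tok_fiber_def by (cases xs rule: rev_cases) auto
  have step: "tok_step (tok ys) t = ts @ [(T, 0)]"
    using xs e unfolding tok_fiber_def by (simp add: tok_append_single)
  then have "t \<notin> fst ` set (tok ys)" using tok_step_eq_append_single_old by blast
  then have "tok ys = ts \<and> t = T" using step tok_step_eq_append_single_new by blast
  then show "xs \<in> (\<lambda>xs. xs @ [T]) ` tok_fiber K d ts"
    using xs e unfolding tok_fiber_def cstates_def by auto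
next
  fix xs assume "xs \<in> (\<lambda>xs. xs @ [T]) ` tok_fiber K d ts"
  then obtain ys where ys: "ys \<in> tok_fiber K d ts" "xs = ys @ [T]" by blast
  have "T \<notin> fst ` set ts" "T \<in> ctypes K d" using assms unfolding tok_states_def by auto
  then show "xs \<in> tok_fiber K d (ts @ [(T, 0)])"
    using ys unfolding tok_fiber_def cstates_def by (simp add: tok_append_single tok_step_def)
qed

lemma tok_fiber_append_Suc:
  assumes "ts @ [(T, m)] \<in> tok_states K d"
  shows "tok_fiber K d (ts @ [(T, Suc m)]) =
    (\<lambda>(xs, t). xs @ [t]) ` (tok_fiber K d (ts @ [(T, m)]) \<times> fst ` set (ts @ [(T, m)]))"
proof (intro equalityI subsetI)
  fix xs assume xs: "xs \<in> tok_fiber K d (ts @ [(T, Suc m)])"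
  then obtain ys t where e: "xs = ys @ [t]"
    unfolding tok_fiber_def by (cases xs rule: rev_cases) auto
  have step: "tok_step (tok ys) t = ts @ [(T, Suc m)]"
    using xs e unfolding tok_fiber_def by (simp add: tok_append_single)
  then have old: "t \<in> fst ` set (tok ys)" using tok_step_eq_append_single_new by blast
  then have "tok ys = ts @ [(T, m)]" using step tok_step_eq_append_single_old by blast
  then have "(ys, t) \<in> tok_fiber K d (ts @ [(T, m)]) \<times> fst ` set (ts @ [(T, m)])"
    using xs e old unfolding tok_fiber_def cstates_def by auto
  then show "xs \<in> (\<lambda>(xs, t). xs @ [t]) ` (tok_fiber K d (ts @ [(T, m)]) \<times> fst ` set (ts @ [(T, m)]))"
    using e by (intro image_eqI[of _ _ "(ys, t)"]) auto
next
  fix xs assume "xs \<in> (\<lambda>(xs, t). xs @ [t]) ` (tok_fiber K d (ts @ [(T, m)]) \<times> fst ` set (ts @ [(T, m)]))"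
  then obtain ys t where ys: "ys \<in> tok_fiber K d (ts @ [(T, m)])" "t \<in> fst ` set (ts @ [(T, m)])"
    and e: "xs = ys @ [t]" by (auto simp only: image_iff split: prod.splits)
  have "t \<in> ctypes K d" using assms ys(2) unfolding tok_states_def by auto
  moreover have "tok xs = ts @ [(T, Suc m)]"
    using ys e tok_step_eq_append_single_old[of t "ts @ [(T, m)]"]
    unfolding tok_fiber_def by (simp add: tok_append_single)
  ultimately show "xs \<in> tok_fiber K d (ts @ [(T, Suc m)])"
    using ys e unfolding tok_fiber_def cstates_def by simp
qed

definition token_servers :: "(nat set \<times> nat) list \<Rightarrow> nat" where
  "token_servers ts = card (\<Union> (fst ` set ts))"

lemma token_servers_append_single:
  "token_servers (ts @ [(T, m)]) = token_servers (ts @ [(T, m')])"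
  unfolding token_servers_def by simp

lemma tok_weight_append_single:
  "tok_weight K d lam mu (ts @ [(T, m)]) = tok_weight K d lam mu ts / real (Suc (length ts)) *
     (real (Suc (length ts)) * lam / (mu * real (K choose d) * real (token_servers (ts @ [(T, m)])))) ^ Suc m"
proof -
  let ?l = "length ts" and ?N = "real (K choose d)"
  let ?f = "\<lambda>j. (real j * lam / (mu * ?N * real (Fj j (ts @ [(T, m)])))) ^ (snd ((ts @ [(T, m)]) ! (j - 1)) + 1)"
  have "(\<Prod>j\<in>{1..Suc ?l}. ?f j) = (\<Prod>j\<in>{1..?l}. ?f j) * ?f (Suc ?l)" by simp
  also have "(\<Prod>j\<in>{1..?l}. ?f j) = (\<Prod>j\<in>{1..?l}. (real j * lam / (mu * ?N * real (Fj j ts))) ^ (snd (ts ! (j - 1)) + 1))"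
    by (intro prod.cong refl) (auto simp: Fj_def nth_append)
  also have "?f (Suc ?l) = (real (Suc ?l) * lam / (mu * ?N * real (token_servers (ts @ [(T, m)])))) ^ Suc m"
    by (simp add: Fj_def token_servers_def nth_append)
  finally have "(\<Prod>j\<in>{1..Suc ?l}. ?f j) = (\<Prod>j\<in>{1..?l}. (real j * lam / (mu * ?N * real (Fj j ts))) ^ (snd (ts ! (j - 1)) + 1))
     * (real (Suc ?l) * lam / (mu * ?N * real (token_servers (ts @ [(T, m)])))) ^ Suc m" .
  then show ?thesis unfolding tok_weight_def length_append_singleton by (simp add: field_simps)
qed

lemma tok_weight_append_new:
  "tok_weight K d lam mu (ts @ [(T, 0)]) =
     tok_weight K d lam mu ts * (lam / (mu * real (K choose d) * real (token_servers (ts @ [(T, 0)]))))"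
  unfolding tok_weight_append_single by simp

lemma tok_weight_append_Suc:
  "tok_weight K d lam mu (ts @ [(T, Suc m)]) = tok_weight K d lam mu (ts @ [(T, m)]) *
     (real (Suc (length ts)) * lam / (mu * real (K choose d) * real (token_servers (ts @ [(T, 0)]))))"
  unfolding tok_weight_append_single token_servers_append_single[of ts T "Suc m" 0]
    token_servers_append_single[of ts T m 0] by simp

locale coc_model =
  fixes K d :: nat and lam mu :: real
  assumes d_pos: "1 \<le> d" and d_le_K: "d \<le> K" and lam_pos: "0 < lam" and mu_pos: "0 < mu"
begin

abbreviation "types \<equiv> ctypes K d"
abbreviation "S \<equiv> cstates K d"
abbreviation "q \<equiv> coc_rate K d lam mu"

definition type_rate :: real where
  "type_rate = lam / real (K choose d)"

definition busy :: "nat set list \<Rightarrow> nat" where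
  "busy xs = card (\<Union> (set xs))"

definition weight :: "nat set list \<Rightarrow> real" where
  "weight xs = (\<Prod>j<length xs. type_rate / (mu * real (busy (take (Suc j) xs))))"

lemma cstates_iff: "xs \<in> S \<longleftrightarrow> set xs \<subseteq> types"
  unfolding cstates_def by simp

lemma choose_pos: "0 < K choose d"
  using d_le_K by simp

lemma type_rate_pos: "0 < type_rate"
  unfolding type_rate_def using choose_pos lam_pos by simp

lemma finite_Union_cstate: "xs \<in> S \<Longrightarrow> finite (\<Union> (set xs))"
  using ctypes_finite_nonempty[OF _ d_pos] by (auto simp: cstates_iff)

lemma busy_le_K: "xs \<in> S \<Longrightarrow> busy xs \<le> K"
proof -
  assume "xs \<in> S"
  then have "\<Union> (set xs) \<subseteq> {..<K}" by (auto simp: cstates_iff ctypes_def)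
  then show ?thesis unfolding busy_def using card_mono[of "{..<K}"] by fastforce
qed

lemma busy_pos: "xs \<in> S \<Longrightarrow> xs \<noteq> [] \<Longrightarrow> 0 < busy xs"
proof -
  assume xs: "xs \<in> S" "xs \<noteq> []"
  then obtain t where "t \<in> set xs" by (cases xs) auto
  moreover have "t \<noteq> {}"
    using calculation xs ctypes_finite_nonempty[OF _ d_pos] by (auto simp: cstates_iff)
  ultimately show ?thesis
    using finite_Union_cstate[OF xs(1)] unfolding busy_def by (auto simp: card_gt_0_iff)
qed

lemma busy_append_single:
  "xs \<in> S \<Longrightarrow> c \<in> types \<Longrightarrow> busy (xs @ [c]) = busy xs + card (c - \<Union> (set xs))"
  unfolding busy_def
  by (rule card_Union_append_single[OF finite_Union_cstate ctypes_finite_nonempty[OF _ d_pos, THEN conjunct1]])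

lemma sum_nserving_busy: "xs \<in> S \<Longrightarrow> (\<Sum>k<length xs. real (nserving xs k)) = real (busy xs)"
  unfolding busy_def using sum_nserving[of xs] ctypes_finite_nonempty[OF _ d_pos]
  by (auto simp: cstates_iff simp flip: of_nat_sum)

lemma weight_Nil [simp]: "weight [] = 1"
  unfolding weight_def by simp

lemma weight_append_single:
  "weight (xs @ [c]) = weight xs * (type_rate / (mu * real (busy (xs @ [c]))))"
proof -
  have "(\<Prod>j<length xs. type_rate / (mu * real (busy (take (Suc j) (xs @ [c])))))
        = weight xs"
    unfolding weight_def by (rule prod.cong) auto
  then show ?thesis unfolding weight_def by simp
qed

lemma weight_pos: "xs \<in> S \<Longrightarrow> 0 < weight xs"
proof (induction xs rule: rev_induct)
  case (snoc c xs)
  then have "xs \<in> S" "0 < busy (xs @ [c])" using busy_pos by (auto simp: cstates_iff)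
  then show ?case using snoc.IH weight_append_single type_rate_pos mu_pos by simp
qed simp

lemma weight_insert_nth_append_single:
  assumes "k \<le> length x"
  shows "weight (insert_nth k t (x @ [c])) =
         weight (insert_nth k t x) * (type_rate / (mu * real (busy (x @ [c, t]))))"
proof -
  have "busy (insert_nth k t x @ [c]) = busy (x @ [c, t])"
    unfolding busy_def by (simp add: set_insert_nth Un_ac)
  then show ?thesis by (simp add: insert_nth_append_single[OF assms] weight_append_single)
qed

lemma nserving_insert_nth_append_single:
  "k \<le> length x \<Longrightarrow> nserving (insert_nth k t (x @ [c])) k = nserving (insert_nth k t x) k"
  by (simp add: insert_nth_append_single nserving_append_single length_insert_nth)

lemma sum_departure_flow_append_single:
  "(\<Sum>k\<le>length x. weight (insert_nth k t (x @ [c])) * (mu * real (nserving (insert_nth k t (x @ [c])) k)))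
   = type_rate / (mu * real (busy (x @ [c, t]))) *
     (\<Sum>k\<le>length x. weight (insert_nth k t x) * (mu * real (nserving (insert_nth k t x) k)))"
  by (simp add: sum_distrib_left weight_insert_nth_append_single
      nserving_insert_nth_append_single mult_ac)

text \<open>Partial balance: the arrival flow of type t out of x equals the flow into x caused by
  departures of a type-t customer, summed over all queue positions it could have occupied.\<close>

lemma departure_partial_balance:
  assumes "x \<in> S" "t \<in> types"
  shows "(\<Sum>k\<le>length x. weight (insert_nth k t x) * (mu * real (nserving (insert_nth k t x) k)))
         = type_rate * weight x"
  using assms(1)
proof (induction x rule: rev_induct)
  case Nil
  have "card t = d" using assms(2) by (simp add: ctypes_def)
  then show ?case using mu_pos d_pos
    by (simp add: insert_nth_def weight_def busy_def nserving_def)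
next
  case (snoc c x)
  then have x: "x \<in> S" and c: "c \<in> types" by (auto simp: cstates_iff)
  let ?g = "\<lambda>x k. weight (insert_nth k t x) * (mu * real (nserving (insert_nth k t x) k))"
  let ?C = "real (busy (x @ [c, t]))" and ?new = "real (card (t - \<Union> (set (x @ [c]))))"
  have C: "?C = real (busy (x @ [c])) + ?new"
    using busy_append_single[OF snoc.prems assms(2)] by simp
  have busy_pos': "0 < busy (x @ [c])" using busy_pos snoc.prems by simp
  have "(\<Sum>k\<le>length x. ?g (x @ [c]) k) = type_rate / (mu * ?C) * (\<Sum>k\<le>length x. ?g x k)"
    by (rule sum_departure_flow_append_single)
  also have "\<dots> = type_rate / (mu * ?C) * (weight (x @ [c]) * mu * real (busy (x @ [c])))"
    using snoc.IH[OF x] weight_append_single[of x c] busy_pos' mu_pos by simp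
  finally have earlier: "(\<Sum>k\<le>length x. ?g (x @ [c]) k)
      = type_rate / (mu * ?C) * (weight (x @ [c]) * mu * real (busy (x @ [c])))" .
  have at_end: "?g (x @ [c]) (Suc (length x)) = weight (x @ [c]) * (type_rate / (mu * ?C)) * (mu * ?new)"
    using insert_nth_length[of "x @ [c]" t] nserving_append_single_last[of "x @ [c]" t]
      weight_append_single[of "x @ [c]" t] by simp
  have "(\<Sum>k\<le>length (x @ [c]). ?g (x @ [c]) k)
      = (\<Sum>k\<le>length x. ?g (x @ [c]) k) + ?g (x @ [c]) (Suc (length x))" by simp
  also have "\<dots> = type_rate * weight (x @ [c]) * (real (busy (x @ [c])) + ?new) / ?C"
    unfolding earlier at_end using mu_pos by (simp add: field_simps add_divide_distrib)
  also have "\<dots> = type_rate * weight (x @ [c])"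
    using C busy_pos' by simp
  finally show ?case .
qed

definition level :: "nat \<Rightarrow> nat set list set" where
  "level n = {xs. set xs \<subseteq> types \<and> length xs = n}"

definition levels_upto :: "nat \<Rightarrow> nat set list set" where
  "levels_upto n = {xs. set xs \<subseteq> types \<and> length xs \<le> n}"

lemma finite_level: "finite (level n)"
  unfolding level_def by (rule finite_lists_length_eq[OF finite_ctypes])

lemma finite_levels_upto: "finite (levels_upto n)"
  unfolding levels_upto_def by (rule finite_lists_length_le[OF finite_ctypes])

lemma levels_upto_subset: "levels_upto n \<subseteq> S"
  unfolding levels_upto_def by (auto simp: cstates_iff)

lemma level_subset_levels_upto: "m \<le> n \<Longrightarrow> level m \<subseteq> levels_upto n"
  unfolding levels_upto_def level_def by auto

lemma levels_upto_Suc: "levels_upto (Suc n) = levels_upto n \<union> level (Suc n)"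
  unfolding levels_upto_def level_def by auto

definition arrival_rate :: "nat set list \<Rightarrow> nat set list \<Rightarrow> real" where
  "arrival_rate y x = (if \<exists>t\<in>types. x = y @ [t] then type_rate else 0)"

definition departure_rate :: "nat set list \<Rightarrow> nat set list \<Rightarrow> real" where
  "departure_rate y x = (\<Sum>k<length y. if x = del_at k y then mu * real (nserving y k) else 0)"

lemma coc_rate_split: "q y x = arrival_rate y x + departure_rate y x"
  unfolding coc_rate_def arrival_rate_def departure_rate_def type_rate_def by simp

lemma arrival_rate_nonneg: "0 \<le> arrival_rate y x"
  unfolding arrival_rate_def using type_rate_pos by simp

lemma departure_rate_nonneg: "0 \<le> departure_rate y x"
  unfolding departure_rate_def using mu_pos by (auto intro!: sum_nonneg)

lemma coc_rate_nonneg: "0 \<le> q y x"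
  using coc_rate_split arrival_rate_nonneg departure_rate_nonneg by simp

lemma arrival_rate_nonzero: "arrival_rate y x \<noteq> 0 \<Longrightarrow> length x = Suc (length y)"
  unfolding arrival_rate_def by (auto split: if_splits)

lemma departure_rate_nonzero: "departure_rate y x \<noteq> 0 \<Longrightarrow> length y = Suc (length x)"
proof -
  assume "departure_rate y x \<noteq> 0"
  have "\<exists>k<length y. x = del_at k y"
  proof (rule ccontr)
    assume "\<not> (\<exists>k<length y. x = del_at k y)"
    then have "departure_rate y x = 0" unfolding departure_rate_def by (intro sum.neutral) auto
    with \<open>departure_rate y x \<noteq> 0\<close> show False by simp
  qed
  then obtain k where "k < length y" "x = del_at k y" by blast
  then show ?thesis using length_del_at[of k y] by simp
qed

lemma coc_rate_nonzero:
  "q y x \<noteq> 0 \<Longrightarrow> length x = Suc (length y) \<or> length y = Suc (length x)"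
proof -
  assume "q y x \<noteq> 0"
  then have "arrival_rate y x \<noteq> 0 \<or> departure_rate y x \<noteq> 0" using coc_rate_split by auto
  then show ?thesis using arrival_rate_nonzero departure_rate_nonzero by blast
qed

lemma coc_rate_self: "q x x = 0"
  using coc_rate_nonzero by fastforce

lemma coc_rate_remove_first: "t # r \<in> S \<Longrightarrow> 0 < q (t # r) r"
proof -
  assume tr: "t # r \<in> S"
  then have "card t = d" by (simp add: cstates_iff ctypes_def)
  then have "mu * real d \<le> departure_rate (t # r) r"
    unfolding departure_rate_def
    using member_le_sum[of 0 "{..<length (t # r)}"
        "\<lambda>k. if r = del_at k (t # r) then mu * real (nserving (t # r) k) else 0"] mu_pos
    by (simp add: del_at_def nserving_def)
  moreover have "0 < mu * real d" using mu_pos d_pos by simp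
  ultimately show ?thesis
    using coc_rate_split[of "t # r" r] arrival_rate_nonneg[of "t # r" r] by linarith
qed

lemma sum_arrival_rate_levels_upto:
  assumes "y \<in> S"
  shows "(\<Sum>x\<in>levels_upto n. arrival_rate y x) = (if length y < n then lam else 0)"
proof -
  have "(\<Sum>x\<in>levels_upto n. arrival_rate y x)
        = (\<Sum>x\<in>{x\<in>levels_upto n. \<exists>t\<in>types. x = y @ [t]}. type_rate)"
    unfolding arrival_rate_def by (rule sum.inter_filter[OF finite_levels_upto, symmetric])
  also have "{x\<in>levels_upto n. \<exists>t\<in>types. x = y @ [t]}
             = (if length y < n then (\<lambda>t. y @ [t]) ` types else {})"
    using assms unfolding levels_upto_def cstates_iff by auto
  also have "(\<Sum>x\<in>(if length y < n then (\<lambda>t. y @ [t]) ` types else {}). type_rate)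
             = (if length y < n then lam else 0)"
    using card_image[of "\<lambda>t. y @ [t]" types] choose_pos
    by (simp add: inj_on_def card_ctypes type_rate_def)
  finally show ?thesis .
qed

lemma sum_departure_rate_levels_upto:
  assumes "y \<in> S"
  shows "(\<Sum>x\<in>levels_upto n. departure_rate y x)
         = (if length y \<le> Suc n then mu * real (busy y) else 0)"
proof -
  have "(\<Sum>x\<in>levels_upto n. departure_rate y x)
        = (\<Sum>k<length y. if del_at k y \<in> levels_upto n then mu * real (nserving y k) else 0)"
    unfolding departure_rate_def
    by (subst sum.swap) (simp add: sum.delta[OF finite_levels_upto])
  also have "\<dots> = (if length y \<le> Suc n then mu * real (busy y) else 0)"
  proof (cases "length y \<le> Suc n")
    case True
    have "del_at k y \<in> levels_upto n" if "k < length y" for k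
      using True assms that set_del_at length_del_at unfolding levels_upto_def cstates_iff
      by fastforce
    then show ?thesis
      using True sum_nserving_busy[OF assms] by (simp add: sum_distrib_left[symmetric])
  next
    case False
    have "del_at k y \<notin> levels_upto n" if "k < length y" for k
      using False that length_del_at unfolding levels_upto_def by fastforce
    then show ?thesis using False by simp
  qed
  finally show ?thesis .
qed

lemma sum_coc_rate_levels_upto:
  "y \<in> S \<Longrightarrow> (\<Sum>x\<in>levels_upto n. q y x)
     = (if length y < n then lam else 0) + (if length y \<le> Suc n then mu * real (busy y) else 0)"
  by (simp add: coc_rate_split sum.distrib sum_arrival_rate_levels_upto
      sum_departure_rate_levels_upto)

definition exit_rate :: "nat set list \<Rightarrow> real" where
  "exit_rate x = lam + mu * real (busy x)"

lemma exit_rate_pos: "0 < exit_rate x"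
  unfolding exit_rate_def using lam_pos mu_pos by (simp add: add_pos_nonneg)

lemma infsum_outflow:
  assumes "y \<in> S"
  shows "(\<Sum>\<^sub>\<infinity>x\<in>S - {y}. q y x) = exit_rate y"
proof -
  have "(\<Sum>\<^sub>\<infinity>x\<in>S - {y}. q y x) = (\<Sum>\<^sub>\<infinity>x\<in>levels_upto (Suc (length y)). q y x)"
  proof (rule infsum_cong_neutral)
    fix x assume "x \<in> levels_upto (Suc (length y)) - (S - {y})"
    then show "q y x = 0" using levels_upto_subset coc_rate_self by auto
  next
    fix x assume "x \<in> S - {y} - levels_upto (Suc (length y))"
    then have "\<not> length x \<le> Suc (length y)" by (auto simp: levels_upto_def cstates_iff)
    then show "q y x = 0" using coc_rate_nonzero[of y x] by auto
  qed simp
  then show ?thesis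
    using sum_coc_rate_levels_upto[OF assms] finite_levels_upto by (simp add: exit_rate_def)
qed

text \<open>Only states at most one level above x can jump to x.\<close>

definition inflow :: "(nat set list \<Rightarrow> real) \<Rightarrow> nat set list \<Rightarrow> real" where
  "inflow f x = (\<Sum>y\<in>levels_upto (Suc (length x)). f y * q y x)"

lemma inflow_eq_sum_levels_upto:
  assumes "length x \<le> n"
  shows "inflow f x = (\<Sum>y\<in>levels_upto (Suc n). f y * q y x)"
  unfolding inflow_def
proof (rule sum.mono_neutral_left[OF finite_levels_upto])
  show "levels_upto (Suc (length x)) \<subseteq> levels_upto (Suc n)"
    using assms by (auto simp: levels_upto_def)
  show "\<forall>y\<in>levels_upto (Suc n) - levels_upto (Suc (length x)). f y * q y x = 0"
    using coc_rate_nonzero by (fastforce simp: levels_upto_def)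
qed

lemma infsum_inflow:
  assumes "x \<in> S"
  shows "(\<Sum>\<^sub>\<infinity>y\<in>S - {x}. f y * q y x) = inflow f x"
proof -
  have "(\<Sum>\<^sub>\<infinity>y\<in>S - {x}. f y * q y x) = (\<Sum>\<^sub>\<infinity>y\<in>levels_upto (Suc (length x)). f y * q y x)"
  proof (rule infsum_cong_neutral)
    fix y assume "y \<in> levels_upto (Suc (length x)) - (S - {x})"
    then show "f y * q y x = 0" using levels_upto_subset coc_rate_self by auto
  next
    fix y assume "y \<in> S - {x} - levels_upto (Suc (length x))"
    then have "\<not> length y \<le> Suc (length x)" by (auto simp: levels_upto_def cstates_iff)
    then show "f y * q y x = 0" using coc_rate_nonzero[of y x] by auto
  qed simp
  then show ?thesis unfolding inflow_def using finite_levels_upto by simp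
qed

lemma stationary_dist_iff:
  "stationary_dist S q p \<longleftrightarrow>
     (\<forall>x\<in>S. 0 \<le> p x) \<and> (p has_sum 1) S \<and> (\<forall>x\<in>S. p x * exit_rate x = inflow p x)"
  unfolding stationary_dist_def using infsum_outflow infsum_inflow by simp

lemma arrival_inflow:
  assumes "x \<in> S"
  shows "(\<Sum>y\<in>levels_upto (Suc (length x)). f y * arrival_rate y x)
         = (if x = [] then 0 else f (butlast x) * type_rate)"
proof -
  have "(\<Sum>y\<in>levels_upto (Suc (length x)). f y * arrival_rate y x)
        = (\<Sum>y\<in>levels_upto (Suc (length x)). if \<exists>t\<in>types. x = y @ [t] then f y * type_rate else 0)"
    unfolding arrival_rate_def by (intro sum.cong) auto
  also have "\<dots> = (\<Sum>y\<in>{y\<in>levels_upto (Suc (length x)). \<exists>t\<in>types. x = y @ [t]}. f y * type_rate)"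
    by (rule sum.inter_filter[OF finite_levels_upto, symmetric])
  also have "{y\<in>levels_upto (Suc (length x)). \<exists>t\<in>types. x = y @ [t]}
             = (if x = [] then {} else {butlast x})"
  proof (cases x rule: rev_cases)
    case (snoc y t)
    then show ?thesis
      using assms by (auto simp: levels_upto_def cstates_iff)
  qed simp
  finally show ?thesis by simp
qed

lemma departure_inflow:
  assumes "x \<in> S"
  shows "(\<Sum>y\<in>levels_upto (Suc (length x)). f y * departure_rate y x)
         = (\<Sum>t\<in>types. \<Sum>k\<le>length x. f (insert_nth k t x) * (mu * real (nserving (insert_nth k t x) k)))"
proof -
  let ?n = "Suc (length x)"
  let ?h = "\<lambda>y k. f y * (mu * real (nserving y k))"
  have preimage: "{y \<in> level ?n. x = del_at k y} = (\<lambda>t. insert_nth k t x) ` types"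
    if "k \<le> length x" for k
  proof -
    have "{y \<in> level ?n. x = del_at k y} = {y. set y \<subseteq> types \<and> length y = ?n \<and> del_at k y = x}"
      by (auto simp: level_def)
    then show ?thesis using del_at_preimage[OF _ that] assms by (simp add: cstates_iff)
  qed
  have "(\<Sum>y\<in>levels_upto ?n. f y * departure_rate y x) = (\<Sum>y\<in>level ?n. f y * departure_rate y x)"
    using departure_rate_nonzero
    by (intro sum.mono_neutral_right[OF finite_levels_upto level_subset_levels_upto])
      (auto simp: levels_upto_def level_def)
  also have "\<dots> = (\<Sum>y\<in>level ?n. \<Sum>k<?n. if x = del_at k y then ?h y k else 0)"
    unfolding departure_rate_def sum_distrib_left
    by (intro sum.cong) (auto simp: level_def)
  also have "\<dots> = (\<Sum>k\<le>length x. \<Sum>y\<in>{y \<in> level ?n. x = del_at k y}. ?h y k)"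
    by (subst sum.swap) (simp add: sum.inter_filter[OF finite_level] lessThan_Suc_atMost)
  also have "\<dots> = (\<Sum>k\<le>length x. \<Sum>t\<in>types. ?h (insert_nth k t x) k)"
  proof (rule sum.cong[OF refl])
    fix k assume "k \<in> {..length x}"
    then have k: "k \<le> length x" by simp
    have "inj_on (\<lambda>t. insert_nth k t x) types"
      using nth_insert_nth[OF k] by (metis inj_onI)
    then show "(\<Sum>y\<in>{y \<in> level ?n. x = del_at k y}. ?h y k) = (\<Sum>t\<in>types. ?h (insert_nth k t x) k)"
      unfolding preimage[OF k] by (simp add: sum.reindex)
  qed
  finally show ?thesis by (subst (asm) sum.swap)
qed

lemma inflow_split:
  "x \<in> S \<Longrightarrow> inflow f x = (if x = [] then 0 else f (butlast x) * type_rate)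
     + (\<Sum>t\<in>types. \<Sum>k\<le>length x. f (insert_nth k t x) * (mu * real (nserving (insert_nth k t x) k)))"
  unfolding inflow_def coc_rate_split distrib_left sum.distrib
  by (simp add: arrival_inflow departure_inflow)

lemma inflow_weight:
  assumes "x \<in> S"
  shows "inflow weight x = weight x * exit_rate x"
proof -
  have "(if x = [] then 0 else weight (butlast x) * type_rate) = weight x * mu * real (busy x)"
  proof (cases x rule: rev_cases)
    case (snoc y t)
    then show ?thesis
      using weight_append_single[of y t] busy_pos[OF assms] mu_pos by simp
  qed (simp add: busy_def)
  moreover have "(\<Sum>t\<in>types. type_rate * weight x) = lam * weight x"
    using choose_pos by (simp add: card_ctypes type_rate_def)
  ultimately show ?thesis
    using departure_partial_balance[OF assms]
    by (simp add: inflow_split[OF assms] exit_rate_def algebra_simps)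
qed

lemma type_rate_divide: "type_rate / (mu * r) = lam / (mu * real (K choose d) * r)"
  unfolding type_rate_def by (simp add: mult_ac)

lemma busy_tok_fiber: "xs \<in> tok_fiber K d ts \<Longrightarrow> busy xs = token_servers ts"
  unfolding tok_fiber_def busy_def token_servers_def using fst_set_tok[of xs] by auto

lemma sum_weight_tok_fiber_append_new:
  assumes "ts @ [(T, 0)] \<in> tok_states K d"
  shows "sum weight (tok_fiber K d (ts @ [(T, 0)])) = sum weight (tok_fiber K d ts) *
           (lam / (mu * real (K choose d) * real (token_servers (ts @ [(T, 0)]))))"
proof -
  have "inj_on (\<lambda>xs. xs @ [T]) (tok_fiber K d ts)" by (auto simp: inj_on_def)
  then have "sum weight (tok_fiber K d (ts @ [(T, 0)])) = (\<Sum>xs\<in>tok_fiber K d ts. weight (xs @ [T]))"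
    by (simp add: tok_fiber_append_new[OF assms] sum.reindex)
  also have "\<dots> = (\<Sum>xs\<in>tok_fiber K d ts.
      weight xs * (lam / (mu * real (K choose d) * real (token_servers (ts @ [(T, 0)])))))"
  proof (rule sum.cong[OF refl])
    fix xs assume "xs \<in> tok_fiber K d ts"
    then have "xs @ [T] \<in> tok_fiber K d (ts @ [(T, 0)])" by (simp add: tok_fiber_append_new[OF assms])
    then show "weight (xs @ [T]) = weight xs * (lam / (mu * real (K choose d) * real (token_servers (ts @ [(T, 0)]))))"
      by (simp add: weight_append_single busy_tok_fiber type_rate_divide)
  qed
  finally show ?thesis by (simp only: sum_distrib_right)
qed

lemma sum_weight_tok_fiber_append_Suc:
  assumes "ts @ [(T, m)] \<in> tok_states K d"
  shows "sum weight (tok_fiber K d (ts @ [(T, Suc m)])) = sum weight (tok_fiber K d (ts @ [(T, m)])) *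
           (real (Suc (length ts)) * lam / (mu * real (K choose d) * real (token_servers (ts @ [(T, 0)]))))"
proof -
  let ?F = "tok_fiber K d (ts @ [(T, m)])" and ?A = "fst ` set (ts @ [(T, m)])"
  let ?r = "lam / (mu * real (K choose d) * real (token_servers (ts @ [(T, 0)])))"
  have card_A: "card ?A = Suc (length ts)"
    using assms distinct_card[of "map fst (ts @ [(T, m)])"] by (simp add: tok_states_def)
  have "inj_on (\<lambda>(xs, t). xs @ [t]) (?F \<times> ?A)" by (auto simp: inj_on_def)
  then have "sum weight (tok_fiber K d (ts @ [(T, Suc m)])) = (\<Sum>(xs, t)\<in>?F \<times> ?A. weight (xs @ [t]))"
    by (simp add: tok_fiber_append_Suc[OF assms] sum.reindex case_prod_unfold)
  also have "\<dots> = (\<Sum>xs\<in>?F. \<Sum>t\<in>?A. weight (xs @ [t]))"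
    by (rule sum.cartesian_product[symmetric])
  also have "\<dots> = (\<Sum>xs\<in>?F. \<Sum>t\<in>?A. weight xs * ?r)"
  proof (intro sum.cong refl)
    fix xs t assume "xs \<in> ?F" "t \<in> ?A"
    then have "xs @ [t] \<in> tok_fiber K d (ts @ [(T, Suc m)])"
      unfolding tok_fiber_append_Suc[OF assms] by auto
    then show "weight (xs @ [t]) = weight xs * ?r"
      using token_servers_append_single[of ts T "Suc m" 0]
      by (simp add: weight_append_single busy_tok_fiber type_rate_divide)
  qed
  also have "\<dots> = (\<Sum>xs\<in>?F. weight xs * (real (Suc (length ts)) * ?r))"
    by (intro sum.cong refl) (simp only: sum_constant card_A mult_ac)
  also have "\<dots> = sum weight ?F * (real (Suc (length ts)) * ?r)"
    by (simp only: sum_distrib_right)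
  finally show ?thesis by simp
qed

lemma sum_weight_tok_fiber:
  "ts \<in> tok_states K d \<Longrightarrow>
     finite (tok_fiber K d ts) \<and> sum weight (tok_fiber K d ts) = tok_weight K d lam mu ts"
proof (induction ts rule: rev_induct)
  case Nil
  then show ?case by (simp add: tok_fiber_Nil tok_weight_def)
next
  case (snoc p ts)
  obtain T m where p: "p = (T, m)" by fastforce
  have states: "ts @ [(T, j)] \<in> tok_states K d" for j
    using snoc.prems p by (auto simp: tok_states_def)
  then have "ts \<in> tok_states K d" by (auto simp: tok_states_def)
  then have IH: "finite (tok_fiber K d ts)" "sum weight (tok_fiber K d ts) = tok_weight K d lam mu ts"
    using snoc.IH by auto
  have "finite (tok_fiber K d (ts @ [(T, j)])) \<and>
        sum weight (tok_fiber K d (ts @ [(T, j)])) = tok_weight K d lam mu (ts @ [(T, j)])" for j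
  proof (induction j)
    case 0
    then show ?case
      using IH sum_weight_tok_fiber_append_new[OF states]
      by (simp add: tok_fiber_append_new[OF states] tok_weight_append_new)
  next
    case (Suc j)
    then show ?case
      using sum_weight_tok_fiber_append_Suc[OF states]
      by (simp add: tok_fiber_append_Suc[OF states] tok_weight_append_Suc)
  qed
  then show ?case using p by simp
qed

lemma tok_weight_nonneg: "ts \<in> tok_states K d \<Longrightarrow> 0 \<le> tok_weight K d lam mu ts"
  using sum_weight_tok_fiber[of ts] weight_pos
  by (metis (no_types, lifting) less_imp_le mem_Collect_eq sum_nonneg tok_fiber_def)

lemma weight_summable:
  assumes "tok_weight K d lam mu summable_on tok_states K d"
  shows "weight summable_on S"
proof (rule nonneg_bdd_above_summable_on)
  show "0 \<le> weight x" if "x \<in> S" for x using weight_pos[OF that] by simp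
  show "bdd_above (sum weight ` {F. F \<subseteq> S \<and> finite F})"
  proof (rule bdd_aboveI2)
    fix F assume "F \<in> {F. F \<subseteq> S \<and> finite F}"
    then have F: "F \<subseteq> S" "finite F" by auto
    have fiber: "finite (tok_fiber K d ts) \<and> sum weight (tok_fiber K d ts) = tok_weight K d lam mu ts"
      if "ts \<in> tok ` F" for ts
      using that F(1) tok_in_tok_states sum_weight_tok_fiber by blast
    have "sum weight F = (\<Sum>ts\<in>tok ` F. sum weight {x\<in>F. tok x = ts})"
      by (rule sum.image_gen[OF F(2)])
    also have "\<dots> \<le> (\<Sum>ts\<in>tok ` F. tok_weight K d lam mu ts)"
    proof (rule sum_mono)
      fix ts assume ts: "ts \<in> tok ` F"
      have "{x\<in>F. tok x = ts} \<subseteq> tok_fiber K d ts" using F(1) by (auto simp: tok_fiber_def)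
      then have "sum weight {x\<in>F. tok x = ts} \<le> sum weight (tok_fiber K d ts)"
        using fiber[OF ts] weight_pos
        by (intro sum_mono2) (auto simp: tok_fiber_def intro: less_imp_le)
      then show "sum weight {x\<in>F. tok x = ts} \<le> tok_weight K d lam mu ts" using fiber[OF ts] by simp
    qed
    also have "\<dots> \<le> infsum (tok_weight K d lam mu) (tok_states K d)"
      by (rule finite_sum_le_infsum[OF assms]) (use F tok_in_tok_states tok_weight_nonneg in auto)
    finally show "sum weight F \<le> infsum (tok_weight K d lam mu) (tok_states K d)" .
  qed
qed

lemma stationary_dist_exists:
  assumes "weight summable_on S"
  shows "\<exists>p. stationary_dist S q p"
proof -
  let ?Z = "infsum weight S"
  have "sum weight {[]} \<le> ?Z"
    using weight_pos by (intro finite_sum_le_infsum[OF assms]) (auto simp: cstates_iff intro: less_imp_le)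
  then have Z: "1 \<le> ?Z" by simp
  define p where "p x = weight x / ?Z" for x
  have "((\<lambda>x. weight x / ?Z) has_sum (?Z / ?Z)) S"
    by (rule has_sum_divide_const[OF has_sum_infsum[OF assms]])
  then have "(p has_sum 1) S" unfolding p_def using Z by simp
  moreover have "0 \<le> p x" if "x \<in> S" for x
    unfolding p_def using Z weight_pos[OF that] by simp
  moreover have "p x * exit_rate x = inflow p x" if "x \<in> S" for x
    using inflow_weight[OF that] unfolding p_def inflow_def
    by (simp add: sum_divide_distrib[symmetric])
  ultimately show ?thesis unfolding stationary_dist_iff by blast
qed

text \<open>Summing the inflow deficits over the first n levels, every transition inside these levels
  cancels; what remains is bounded by the flow down from level n+1, at rate at most mu K.\<close>

lemma sum_inflow_deficit_le:
  assumes "\<And>x. 0 \<le> e x"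
  shows "(\<Sum>x\<in>levels_upto n. inflow e x - e x * exit_rate x) \<le> mu * real K * sum e (level (Suc n))"
proof -
  let ?R = "\<lambda>y. \<Sum>x\<in>levels_upto n. q y x"
  have "(\<Sum>x\<in>levels_upto n. inflow e x) = (\<Sum>x\<in>levels_upto n. \<Sum>y\<in>levels_upto (Suc n). e y * q y x)"
    by (intro sum.cong refl inflow_eq_sum_levels_upto) (auto simp: levels_upto_def)
  also have "\<dots> = (\<Sum>y\<in>levels_upto (Suc n). e y * ?R y)"
    by (subst sum.swap) (simp add: sum_distrib_left)
  also have "\<dots> = (\<Sum>y\<in>levels_upto n. e y * ?R y) + (\<Sum>y\<in>level (Suc n). e y * ?R y)"
    unfolding levels_upto_Suc
    by (rule sum.union_disjoint[OF finite_levels_upto finite_level]) (auto simp: levels_upto_def level_def)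
  also have "(\<Sum>y\<in>levels_upto n. e y * ?R y) \<le> (\<Sum>y\<in>levels_upto n. e y * exit_rate y)"
  proof (rule sum_mono)
    fix y assume "y \<in> levels_upto n"
    then have "y \<in> S" using levels_upto_subset by blast
    moreover have "0 \<le> mu * real (busy y)" using mu_pos by simp
    ultimately have "?R y \<le> exit_rate y"
      using sum_coc_rate_levels_upto[of y n] lam_pos by (simp add: exit_rate_def)
    then show "e y * ?R y \<le> e y * exit_rate y" using assms by (simp add: mult_left_mono)
  qed
  also have "(\<Sum>y\<in>level (Suc n). e y * ?R y) \<le> (\<Sum>y\<in>level (Suc n). e y * (mu * real K))"
  proof (rule sum_mono)
    fix y assume y: "y \<in> level (Suc n)"
    then have "y \<in> S" using level_subset_levels_upto levels_upto_subset by blast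
    moreover have "length y = Suc n" using y by (simp add: level_def)
    ultimately have "?R y \<le> mu * real K"
      using sum_coc_rate_levels_upto[of y n] busy_le_K mu_pos by simp
    then show "e y * ?R y \<le> e y * (mu * real K)" using assms by (simp add: mult_left_mono)
  qed
  finally show ?thesis by (simp add: sum_subtractf sum_distrib_left sum_distrib_right mult_ac)
qed

lemma level_sums_lower_bound_nonpos:
  fixes e :: "nat set list \<Rightarrow> real"
  assumes "e summable_on S" "\<And>x. 0 \<le> e x" "\<And>m. m0 \<le> m \<Longrightarrow> \<delta> \<le> sum e (level (Suc m))"
  shows "\<delta> \<le> 0"
proof (rule ccontr)
  assume "\<not> \<delta> \<le> 0"
  then have \<delta>: "0 < \<delta>" by simp
  obtain M :: nat where M: "infsum e S / \<delta> < real M" using reals_Archimedean2 by blast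
  let ?I = "{m0..<m0 + M}"
  have "real M * \<delta> = (\<Sum>m\<in>?I. \<delta>)" by simp
  also have "\<dots> \<le> (\<Sum>m\<in>?I. sum e (level (Suc m)))"
    using assms(3) by (intro sum_mono) simp
  also have "\<dots> = sum e (\<Union>m\<in>?I. level (Suc m))"
  proof (rule sum.UNION_disjoint[symmetric])
    show "\<forall>m\<in>?I. finite (level (Suc m))" using finite_level by blast
    show "\<forall>i\<in>?I. \<forall>j\<in>?I. i \<noteq> j \<longrightarrow> level (Suc i) \<inter> level (Suc j) = {}"
      by (auto simp: level_def)
  qed simp
  also have "\<dots> \<le> infsum e S"
    using level_subset_levels_upto levels_upto_subset finite_level assms(2)
    by (intro finite_sum_le_infsum[OF assms(1)]) blast+
  finally show False using M \<delta> by (simp add: field_simps)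
qed

lemma subinvariant_imp_invariant:
  fixes e :: "nat set list \<Rightarrow> real"
  assumes "e summable_on S" "\<And>x. 0 \<le> e x" "\<And>x. x \<in> S \<Longrightarrow> e x * exit_rate x \<le> inflow e x"
    and "x \<in> S"
  shows "e x * exit_rate x = inflow e x"
proof -
  let ?D = "\<lambda>x. inflow e x - e x * exit_rate x"
  have "?D x / (mu * real K) \<le> sum e (level (Suc m))" if "length x \<le> m" for m
  proof -
    have "x \<in> levels_upto m" using assms(4) that by (auto simp: levels_upto_def cstates_iff)
    then have "?D x \<le> (\<Sum>x\<in>levels_upto m. ?D x)"
      using assms(3) levels_upto_subset
      by (intro member_le_sum finite_levels_upto) (auto simp: subset_iff)
    also have "\<dots> \<le> mu * real K * sum e (level (Suc m))"
      by (rule sum_inflow_deficit_le[OF assms(2)])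
    finally show ?thesis using mu_pos d_pos d_le_K by (simp add: field_simps)
  qed
  then have "?D x / (mu * real K) \<le> 0"
    by (rule level_sums_lower_bound_nonpos[OF assms(1,2)])
  moreover have "0 < mu * real K" using mu_pos d_pos d_le_K by simp
  ultimately show ?thesis using assms(3)[OF assms(4)] by (simp add: divide_le_0_iff)
qed

lemma invariant_vanishing:
  fixes e :: "nat set list \<Rightarrow> real"
  assumes "\<And>x. 0 \<le> e x" "\<And>x. x \<in> S \<Longrightarrow> e x * exit_rate x = inflow e x" "e [] = 0"
  shows "x \<in> S \<Longrightarrow> e x = 0"
proof (induction x)
  case (Cons t r)
  then have r: "r \<in> S" by (simp add: cstates_iff)
  have "inflow e r = 0" using assms(2)[OF r] Cons.IH[OF r] by simp
  then have "\<forall>y\<in>levels_upto (Suc (length r)). e y * q y r = 0"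
    using assms(1) coc_rate_nonneg
    by (simp add: inflow_def sum_nonneg_eq_0_iff[OF finite_levels_upto])
  moreover have "t # r \<in> levels_upto (Suc (length r))"
    using Cons.prems by (simp add: levels_upto_def cstates_iff)
  ultimately have "e (t # r) * q (t # r) r = 0" by blast
  then show ?case using coc_rate_remove_first[OF Cons.prems] by simp
qed (use assms(3) in simp)

lemma abs_subinvariant:
  assumes "f x * exit_rate x = inflow f x"
  shows "\<bar>f x\<bar> * exit_rate x \<le> inflow (\<lambda>y. \<bar>f y\<bar>) x"
proof -
  have "\<bar>f x\<bar> * exit_rate x = \<bar>inflow f x\<bar>"
    using assms exit_rate_pos[of x] by (metis abs_mult abs_of_pos)
  also have "\<dots> \<le> inflow (\<lambda>y. \<bar>f y\<bar>) x"
    unfolding inflow_def using coc_rate_nonneg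
    by (auto simp: abs_mult intro: order_trans[OF sum_abs])
  finally show ?thesis .
qed

lemma stationary_dist_unique:
  assumes summable: "weight summable_on S" and p: "stationary_dist S q p" and "x \<in> S"
  shows "p x = p [] * weight x"
proof -
  define e where "e y = \<bar>p y - p [] * weight y\<bar>" for y
  have p_nonneg: "\<And>y. y \<in> S \<Longrightarrow> 0 \<le> p y" and "(p has_sum 1) S"
    and p_balance: "\<And>y. y \<in> S \<Longrightarrow> p y * exit_rate y = inflow p y"
    using p unfolding stationary_dist_iff by auto
  then have "p summable_on S" by (auto simp: summable_on_def)
  then have "(\<lambda>y. p y + \<bar>p []\<bar> * weight y) summable_on S"
    using summable_on_cmult_right[OF summable] by (rule summable_on_add)
  then have "(\<lambda>y. norm (p y - p [] * weight y)) summable_on S"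
  proof (rule Infinite_Sum.abs_summable_on_comparison_test')
    fix y assume "y \<in> S"
    then show "norm (p y - p [] * weight y) \<le> p y + \<bar>p []\<bar> * weight y"
      using abs_triangle_ineq4[of "p y" "p [] * weight y"] p_nonneg weight_pos[of y]
      by (simp add: abs_mult)
  qed
  then have e_summable: "e summable_on S" unfolding e_def real_norm_def .
  have e_nonneg: "0 \<le> e y" for y by (simp add: e_def)
  have e_subinvariant: "e y * exit_rate y \<le> inflow e y" if "y \<in> S" for y
  proof -
    have "inflow (\<lambda>z. p z - p [] * weight z) y = inflow p y - p [] * inflow weight y"
      unfolding inflow_def by (simp add: algebra_simps sum_subtractf sum_distrib_left)
    then have "(p y - p [] * weight y) * exit_rate y = inflow (\<lambda>z. p z - p [] * weight z) y"
      using p_balance[OF that] inflow_weight[OF that] by (simp add: algebra_simps)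
    then show ?thesis unfolding e_def by (rule abs_subinvariant)
  qed
  have e_invariant: "e y * exit_rate y = inflow e y" if "y \<in> S" for y
    by (rule subinvariant_imp_invariant[OF e_summable e_nonneg e_subinvariant that])
  have "e [] = 0" by (simp add: e_def)
  then have "e x = 0"
    using invariant_vanishing[of e] e_nonneg e_invariant assms(3) by blast
  then show ?thesis by (simp add: e_def)
qed

lemma tok_marg_product_form:
  assumes "weight summable_on S" "stationary_dist S q p" "ts \<in> tok_states K d"
  shows "tok_marg K d p ts = tok_marg K d p [] * tok_weight K d lam mu ts"
proof -
  have marg: "tok_marg K d p ts = infsum p (tok_fiber K d ts)" for ts
    by (simp add: tok_marg_def tok_fiber_def)
  obtain finite: "finite (tok_fiber K d ts)"
    and sum: "sum weight (tok_fiber K d ts) = tok_weight K d lam mu ts"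
    using sum_weight_tok_fiber[OF assms(3)] by blast
  have "tok_marg K d p ts = (\<Sum>xs\<in>tok_fiber K d ts. p [] * weight xs)"
    unfolding marg using finite stationary_dist_unique[OF assms(1,2)]
    by (auto simp: tok_fiber_def intro: sum.cong)
  moreover have "tok_marg K d p [] = p []" by (simp add: marg tok_fiber_Nil)
  ultimately show ?thesis by (simp add: sum flip: sum_distrib_left)
qed

end

theorem mainTheorem10:
  fixes K d :: nat and lam mu :: real
  assumes "1 \<le> d" and "d \<le> K" and "0 < lam" and "0 < mu"
    and "tok_weight K d lam mu summable_on tok_states K d"
  shows "(\<exists>p. stationary_dist (cstates K d) (coc_rate K d lam mu) p) \<and>
         (\<forall>p. stationary_dist (cstates K d) (coc_rate K d lam mu) p \<longrightarrow>
            (\<forall>ts\<in>tok_states K d.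
               tok_marg K d p ts = tok_marg K d p [] * tok_weight K d lam mu ts))"
proof -
  interpret coc_model K d lam mu using assms(1-4) by unfold_locales
  have "weight summable_on cstates K d" using weight_summable[OF assms(5)] .
  then show ?thesis using stationary_dist_exists tok_marg_product_form by blast
qed

end
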